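(* Consider the binary state-dependent channel with $\mathcal{X}=\mathcal{S}=\mathcal{Y}=\mathcal{Z}=\{0,1\}$, $P_S=\mathrm{Bernoulli}(p)$ with $p\in(0,\tfrac12)$, channel law $Y=Z=X\oplus S$ (modulo-2 addition), no-input symbol $x_0=0$, secret-key rate $R_K>0$, and no binding cost constraint (e.g. $b\equiv 0$). Then the covert capacities with causal and with noncausal CSI at the transmitter are $$C_{\mathrm{c}}=C_{\mathrm{nc}}=H_{\mathrm b}(p)=p\log\frac1p+(1-p)\log\frac1{1-p}.$$
   Context: A state-dependent discrete memoryless channel consists of finite alphabets $\mathcal{X},\mathcal{S},\mathcal{Y},\mathcal{Z}$, state PMF $P_S$ and channel law $P_{Y,Z|S,X}$; states $S^n$ are IID $\sim P_S$, known to the transmitter (causally: $X_i$ depends on $(M,K,S^i)$; noncausally: $X^n$ depends on $(M,K,S^n)$; in both cases possibly also on private randomness) but not to the receiver or warden. $Q_0(z)=\sum_s P_S(s)P_{Z|S,X}(z|s,x_0)$. Key $K$ uniform on $[1:2^{nR_K}]$ and message $M$ uniform on $[1:2^{nR}]$ are independent of each other and of $S^n$; the decoder maps $(Y^n,K)$ to $\hat M$. A rate $R$ is achievable if there are codes with $\limsup_n \mathrm{E}[\frac1n\sum_i b(X_i)]\le B$, $P(\hat M\neq M)\to0$ and $D(\widehat{P}_{Z^n}\|Q_0^{\times n})\to0$, where $\widehat{P}_{Z^n}$ is the warden's output distribution induced by the code; the covert capacity $C_{\mathrm{c}}$ (causal) or $C_{\mathrm{nc}}$ (noncausal) is the supremum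 of achievable rates. *)

theory Defs
  imports "HOL-Analysis.Analysis" "HOL-Library.Extended_Real"
begin

definition seqs :: "nat \<Rightarrow> 'a list set" where
  "seqs n = {xs. length xs = n}"

definition iid :: "('a \<Rightarrow> real) \<Rightarrow> 'a list \<Rightarrow> real" where
  "iid P xs = prod_list (map P xs)"

definition chan_n :: "('s \<Rightarrow> 'x \<Rightarrow> 'y \<Rightarrow> 'z \<Rightarrow> real) \<Rightarrow> 's list \<Rightarrow> 'x list \<Rightarrow> 'y list \<Rightarrow> 'z list \<Rightarrow> real" where
  "chan_n W s x y z = (\<Prod>i<length x. W (s!i) (x!i) (y!i) (z!i))"

definition num_msgs :: "nat \<Rightarrow> real \<Rightarrow> nat" where
  "num_msgs n R = nat \<lceil>2 powr (real n * R)\<rceil>"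

definition num_keys :: "nat \<Rightarrow> real \<Rightarrow> nat" where
  "num_keys n RK = nat \<lfloor>2 powr (real n * RK)\<rfloor>"

text \<open>Stochastic encoder enc m k s x = P(X^n = x | M = m, K = k, S^n = s);
messages are 0..<Mn, keys 0..<Kn (private randomness is absorbed in the kernel).\<close>
definition valid_encoder :: "nat \<Rightarrow> nat \<Rightarrow> nat \<Rightarrow> (nat \<Rightarrow> nat \<Rightarrow> 's list \<Rightarrow> 'x list \<Rightarrow> real) \<Rightarrow> bool" where
  "valid_encoder n Mn Kn enc \<longleftrightarrow>
     (\<forall>m<Mn. \<forall>k<Kn. \<forall>s\<in>seqs n.
        (\<forall>x. 0 \<le> enc m k s x) \<and> (\<Sum>x\<in>seqs n. enc m k s x) = 1)"

text \<open>Causality: the law of X^i given (M,K,S^n) depends on S^n only through S^i.\<close>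
definition causal_encoder :: "nat \<Rightarrow> nat \<Rightarrow> nat \<Rightarrow> (nat \<Rightarrow> nat \<Rightarrow> 's list \<Rightarrow> 'x list \<Rightarrow> real) \<Rightarrow> bool" where
  "causal_encoder n Mn Kn enc \<longleftrightarrow>
     (\<forall>m<Mn. \<forall>k<Kn. \<forall>s\<in>seqs n. \<forall>s'\<in>seqs n. \<forall>i\<le>n. take i s = take i s' \<longrightarrow>
        (\<forall>u\<in>seqs i. (\<Sum>x\<in>{x\<in>seqs n. take i x = u}. enc m k s x)
                   = (\<Sum>x\<in>{x\<in>seqs n. take i x = u}. enc m k s' x)))"

definition joint :: "('s \<Rightarrow> real) \<Rightarrow> ('s \<Rightarrow> 'x \<Rightarrow> 'y \<Rightarrow> 'z \<Rightarrow> real) \<Rightarrow> nat \<Rightarrow> nat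
    \<Rightarrow> (nat \<Rightarrow> nat \<Rightarrow> 's list \<Rightarrow> 'x list \<Rightarrow> real)
    \<Rightarrow> nat \<Rightarrow> nat \<Rightarrow> 's list \<Rightarrow> 'x list \<Rightarrow> 'y list \<Rightarrow> 'z list \<Rightarrow> real" where
  "joint PS W Mn Kn enc m k s x y z =
     1 / (real Mn * real Kn) * iid PS s * enc m k s x * chan_n W s x y z"

definition err_prob :: "('s \<Rightarrow> real) \<Rightarrow> ('s \<Rightarrow> 'x \<Rightarrow> 'y \<Rightarrow> 'z \<Rightarrow> real) \<Rightarrow> nat \<Rightarrow> nat \<Rightarrow> nat
    \<Rightarrow> (nat \<Rightarrow> nat \<Rightarrow> 's list \<Rightarrow> 'x list \<Rightarrow> real) \<Rightarrow> ('y list \<Rightarrow> nat \<Rightarrow> nat) \<Rightarrow> real" where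
  "err_prob PS W n Mn Kn enc dec =
     (\<Sum>m<Mn. \<Sum>k<Kn. \<Sum>s\<in>seqs n. \<Sum>x\<in>seqs n. \<Sum>y\<in>seqs n. \<Sum>z\<in>seqs n.
        joint PS W Mn Kn enc m k s x y z * (if dec y k \<noteq> m then 1 else 0))"

definition exp_cost :: "('s \<Rightarrow> real) \<Rightarrow> ('s \<Rightarrow> 'x \<Rightarrow> 'y \<Rightarrow> 'z \<Rightarrow> real) \<Rightarrow> ('x \<Rightarrow> real) \<Rightarrow> nat \<Rightarrow> nat \<Rightarrow> nat
    \<Rightarrow> (nat \<Rightarrow> nat \<Rightarrow> 's list \<Rightarrow> 'x list \<Rightarrow> real) \<Rightarrow> real" where
  "exp_cost PS W b n Mn Kn enc =
     (\<Sum>m<Mn. \<Sum>k<Kn. \<Sum>s\<in>seqs n. \<Sum>x\<in>seqs n. \<Sum>y\<in>seqs n. \<Sum>z\<in>seqs n.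
        joint PS W Mn Kn enc m k s x y z * ((1 / real n) * (\<Sum>i<n. b (x!i))))"

definition warden_out :: "('s \<Rightarrow> real) \<Rightarrow> ('s \<Rightarrow> 'x \<Rightarrow> 'y \<Rightarrow> 'z \<Rightarrow> real) \<Rightarrow> nat \<Rightarrow> nat \<Rightarrow> nat
    \<Rightarrow> (nat \<Rightarrow> nat \<Rightarrow> 's list \<Rightarrow> 'x list \<Rightarrow> real) \<Rightarrow> 'z list \<Rightarrow> real" where
  "warden_out PS W n Mn Kn enc z =
     (\<Sum>m<Mn. \<Sum>k<Kn. \<Sum>s\<in>seqs n. \<Sum>x\<in>seqs n. \<Sum>y\<in>seqs n.
        joint PS W Mn Kn enc m k s x y z)"

definition Q0 :: "('s::finite \<Rightarrow> real) \<Rightarrow> ('s \<Rightarrow> 'x \<Rightarrow> 'y::finite \<Rightarrow> 'z \<Rightarrow> real) \<Rightarrow> 'x \<Rightarrow> 'z \<Rightarrow> real" where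
  "Q0 PS W x0 z = (\<Sum>s\<in>UNIV. PS s * (\<Sum>y\<in>UNIV. W s x0 y z))"

definition rel_entropy :: "('a \<Rightarrow> real) \<Rightarrow> ('a \<Rightarrow> real) \<Rightarrow> 'a set \<Rightarrow> ereal" where
  "rel_entropy P Q A =
     (if \<exists>a\<in>A. P a > 0 \<and> Q a = 0 then \<infinity>
      else ereal (\<Sum>a\<in>A. if P a = 0 then 0 else P a * log 2 (P a / Q a)))"

text \<open>Covert achievability; causal = True for causal CSI, False for noncausal CSI.\<close>
definition covert_achievable :: "bool \<Rightarrow> ('s::finite \<Rightarrow> real) \<Rightarrow> ('s \<Rightarrow> 'x::finite \<Rightarrow> 'y::finite \<Rightarrow> 'z::finite \<Rightarrow> real)
    \<Rightarrow> 'x \<Rightarrow> ('x \<Rightarrow> real) \<Rightarrow> real \<Rightarrow> real \<Rightarrow> real \<Rightarrow> bool" where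
  "covert_achievable causal PS W x0 b B RK R \<longleftrightarrow>
     (\<exists>(enc :: nat \<Rightarrow> nat \<Rightarrow> nat \<Rightarrow> 's list \<Rightarrow> 'x list \<Rightarrow> real) (dec :: nat \<Rightarrow> 'y list \<Rightarrow> nat \<Rightarrow> nat).
        (\<forall>n. valid_encoder n (num_msgs n R) (num_keys n RK) (enc n)
             \<and> (causal \<longrightarrow> causal_encoder n (num_msgs n R) (num_keys n RK) (enc n)))
      \<and> limsup (\<lambda>n. ereal (exp_cost PS W b n (num_msgs n R) (num_keys n RK) (enc n))) \<le> ereal B
      \<and> (\<lambda>n. err_prob PS W n (num_msgs n R) (num_keys n RK) (enc n) (dec n)) \<longlonglongrightarrow> 0
      \<and> (\<lambda>n. rel_entropy (warden_out PS W n (num_msgs n R) (num_keys n RK) (enc n))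
                          (iid (Q0 PS W x0)) (seqs n)) \<longlonglongrightarrow> 0)"

definition covert_capacity :: "bool \<Rightarrow> ('s::finite \<Rightarrow> real) \<Rightarrow> ('s \<Rightarrow> 'x::finite \<Rightarrow> 'y::finite \<Rightarrow> 'z::finite \<Rightarrow> real)
    \<Rightarrow> 'x \<Rightarrow> ('x \<Rightarrow> real) \<Rightarrow> real \<Rightarrow> real \<Rightarrow> real" where
  "covert_capacity causal PS W x0 b B RK = Sup {R. covert_achievable causal PS W x0 b B RK R}"

text \<open>The binary example: True = 1, False = 0.\<close>
definition bern :: "real \<Rightarrow> bool \<Rightarrow> real" where
  "bern p s = (if s then p else 1 - p)"

definition xor_chan :: "bool \<Rightarrow> bool \<Rightarrow> bool \<Rightarrow> bool \<Rightarrow> real" where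
  "xor_chan s x y z = (if y = (x \<noteq> s) \<and> z = (x \<noteq> s) then 1 else 0)"

definition Hb :: "real \<Rightarrow> real" where
  "Hb p = p * log 2 (1 / p) + (1 - p) * log 2 (1 / (1 - p))"

end

theory Submission
  imports Defs
begin

text \<open>Since Y = Z = X xor S, the warden observes exactly what the receiver observes.

  Converse: covertness makes the output law close to Q0^n = Bern(p)^n in relative entropy.
  At most exp(n b) outputs have Q0^n-probability at least exp(-n b), so they decode to at most
  that many messages; for b > H(p) the remaining outputs are exponentially rare under Q0^n
  (Chernoff bound), hence by a change of measure also rare under the code. Thus R <= Hb(p).

  Achievability: knowing the state, the transmitter can produce any output Z^n independent of
  S^n by sending X^n = Z^n xor S^n, even causally. For a < H(p) almost all Q0^n-mass lies on
  sequences of probability at most exp(-n a); a greedy partition of these into 2^(nR) < exp(n a)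
  cells of almost equal mass gives the code in which message m draws Z^n from Q0^n restricted to
  cell m. Decoding is error-free, and the output law is at most Q0^n / (1 - eta_n) with
  eta_n --> 0.\<close>

lemma finite_seqs [simp]: "finite (seqs n :: 'a::finite list set)"
  unfolding seqs_def using finite_lists_length_eq[of "UNIV :: 'a set" n] by simp

lemma seqs_Suc: "seqs (Suc n) = (\<lambda>(a, z). a # z) ` (UNIV \<times> seqs n)"
  unfolding seqs_def by (auto simp: length_Suc_conv)

lemma sum_iid_seqs: "(\<Sum>z\<in>seqs n. iid P z) = (\<Sum>a\<in>UNIV. P a) ^ n"
  for P :: "'a::finite \<Rightarrow> real"
proof (induction n)
  case 0
  have "seqs 0 = {[]}" by (auto simp: seqs_def)
  then show ?case by (simp add: iid_def seqs_def)
next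
  case (Suc n)
  have inj: "inj_on (\<lambda>(a, z). a # z) (UNIV \<times> (seqs n :: 'a list set))"
    by (auto simp: inj_on_def)
  have "(\<Sum>z\<in>seqs (Suc n). iid P z) = (\<Sum>(a, z)\<in>UNIV \<times> seqs n. iid P (a # z))"
    unfolding seqs_Suc by (subst sum.reindex[OF inj]) (simp add: case_prod_unfold)
  also have "\<dots> = (\<Sum>a\<in>UNIV. \<Sum>z\<in>seqs n. P a * iid P z)"
    by (simp add: sum.cartesian_product[symmetric] iid_def)
  also have "\<dots> = (\<Sum>a\<in>UNIV. P a) * (\<Sum>z\<in>seqs n. iid P z)"
    by (simp add: sum_distrib_left sum_distrib_right) (rule sum.swap)
  finally show ?case using Suc by simp
qed

lemma iid_pos: "(\<And>a. P a > 0) \<Longrightarrow> iid P z > 0"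
  unfolding iid_def by (induction z) auto

lemma iid_nonneg: "(\<And>a. P a \<ge> 0) \<Longrightarrow> iid P z \<ge> 0"
  unfolding iid_def by (induction z) auto

lemma iid_powr: "(\<And>a. P a > 0) \<Longrightarrow> iid P z powr u = iid (\<lambda>a. P a powr u) z"
  unfolding iid_def by (induction z) (auto simp: powr_mult prod_list_nonneg)

definition kl_div :: "('a \<Rightarrow> real) \<Rightarrow> ('a \<Rightarrow> real) \<Rightarrow> 'a set \<Rightarrow> real" where
  "kl_div P Q A = (\<Sum>a\<in>A. if P a = 0 then 0 else P a * ln (P a / Q a))"

lemma rel_entropy_eq_kl_div:
  assumes "\<forall>a\<in>A. Q a > 0"
  shows "rel_entropy P Q A = ereal (kl_div P Q A / ln 2)"
  using assms unfolding rel_entropy_def kl_div_def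
  by (auto simp: log_def sum_divide_distrib intro!: sum.cong)

lemma rel_entropy_tendsto_0_iff:
  assumes "\<And>n. \<forall>a\<in>A n. Q n a > 0"
  shows "(\<lambda>n. rel_entropy (P n) (Q n) (A n)) \<longlonglongrightarrow> 0
     \<longleftrightarrow> (\<lambda>n. kl_div (P n) (Q n) (A n)) \<longlonglongrightarrow> 0"
proof -
  have "(\<lambda>n. rel_entropy (P n) (Q n) (A n)) \<longlonglongrightarrow> 0
      \<longleftrightarrow> (\<lambda>n. kl_div (P n) (Q n) (A n) / ln 2) \<longlonglongrightarrow> 0"
    using assms by (simp add: rel_entropy_eq_kl_div zero_ereal_def)
  also have "\<dots> \<longleftrightarrow> (\<lambda>n. kl_div (P n) (Q n) (A n)) \<longlonglongrightarrow> 0"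
  proof
    assume "(\<lambda>n. kl_div (P n) (Q n) (A n) / ln 2) \<longlonglongrightarrow> 0"
    from tendsto_mult_right_zero[OF this, of "ln 2"] show "(\<lambda>n. kl_div (P n) (Q n) (A n)) \<longlonglongrightarrow> 0"
      by simp
  qed (rule tendsto_divide_zero)
  finally show ?thesis .
qed

text \<open>Fenchel--Young inequality for \<open>x ln x\<close>.\<close>
lemma kl_summand_ge:
  fixes P Q g :: real
  assumes "P \<ge> 0" "Q > 0"
  shows "P * g - Q * exp (g - 1) \<le> (if P = 0 then 0 else P * ln (P / Q))"
proof (cases "P = 0")
  case True
  then show ?thesis using assms(2) by simp
next
  case False
  then have P: "P > 0" using assms by simp
  have "ln (Q * exp (g - 1) / P) \<le> Q * exp (g - 1) / P - 1"
    using P assms by (intro ln_le_minus_one) auto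
  moreover have "ln (Q * exp (g - 1) / P) = ln Q + (g - 1) - ln P"
    using P assms by (simp add: ln_div ln_mult)
  ultimately have "P * (ln Q + (g - 1) - ln P) \<le> P * (Q * exp (g - 1) / P - 1)"
    using P by (intro mult_left_mono) auto
  then show ?thesis using P assms by (simp add: ln_div algebra_simps)
qed

text \<open>Change of measure: \<open>kl_summand_ge\<close> with \<open>g = 1 + L\<close> on \<open>E\<close> and \<open>g = 1\<close> off it.\<close>
lemma kl_div_ge_event:
  assumes fin: "finite Z" and E: "E \<subseteq> Z"
    and P: "\<forall>z\<in>Z. P z \<ge> 0" and Q: "\<forall>z\<in>Z. Q z > 0"
    and sum_P: "(\<Sum>z\<in>Z. P z) = 1" and sum_Q: "(\<Sum>z\<in>Z. Q z) = 1"
  shows "L * (\<Sum>z\<in>E. P z) - exp L * (\<Sum>z\<in>E. Q z) \<le> kl_div P Q Z"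
proof -
  have restrict: "(\<Sum>z\<in>Z. if z \<in> E then f z else 0) = (\<Sum>z\<in>E. f z)" for f :: "_ \<Rightarrow> real"
    using fin E by (simp add: sum.inter_restrict[symmetric] Int_absorb1)
  define g where "g z = 1 + (if z \<in> E then L else 0)" for z
  have "(\<Sum>z\<in>Z. P z * g z - Q z * exp (g z - 1)) \<le> kl_div P Q Z"
    unfolding kl_div_def using P Q by (intro sum_mono kl_summand_ge) auto
  moreover have "(\<Sum>z\<in>Z. P z * g z) = 1 + L * (\<Sum>z\<in>E. P z)"
  proof -
    have "(\<Sum>z\<in>Z. P z * g z) = (\<Sum>z\<in>Z. P z + L * (if z \<in> E then P z else 0))"
      unfolding g_def by (intro sum.cong refl) (auto simp: algebra_simps)
    then show ?thesis using sum_P by (simp add: sum.distrib flip: sum_distrib_left restrict)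
  qed
  moreover have "(\<Sum>z\<in>Z. Q z * exp (g z - 1)) = 1 + (exp L - 1) * (\<Sum>z\<in>E. Q z)"
  proof -
    have "(\<Sum>z\<in>Z. Q z * exp (g z - 1)) = (\<Sum>z\<in>Z. Q z + (exp L - 1) * (if z \<in> E then Q z else 0))"
      unfolding g_def by (intro sum.cong refl) (auto simp: algebra_simps)
    then show ?thesis using sum_Q by (simp add: sum.distrib flip: sum_distrib_left restrict)
  qed
  moreover have "(\<Sum>z\<in>E. Q z) \<ge> 0"
    using Q E by (intro sum_nonneg) (auto simp: less_imp_le subset_iff)
  ultimately show ?thesis by (simp add: sum_subtractf algebra_simps)
qed

lemma kl_div_nonneg:
  assumes "finite Z" "\<forall>z\<in>Z. P z \<ge> 0" "\<forall>z\<in>Z. Q z > 0"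
    "(\<Sum>z\<in>Z. P z) = 1" "(\<Sum>z\<in>Z. Q z) = 1"
  shows "0 \<le> kl_div P Q Z"
  using kl_div_ge_event[OF assms(1) empty_subsetI assms(2-5), of 0] by simp

lemma kl_div_le_ln_of_le:
  assumes "\<forall>z\<in>Z. P z \<ge> 0" "\<forall>z\<in>Z. Q z > 0" "(\<Sum>z\<in>Z. P z) = 1"
    and dominated: "\<forall>z\<in>Z. P z \<le> \<rho> * Q z"
  shows "kl_div P Q Z \<le> ln \<rho>"
proof -
  have "kl_div P Q Z \<le> (\<Sum>z\<in>Z. P z * ln \<rho>)"
    unfolding kl_div_def
  proof (intro sum_mono)
    fix z assume z: "z \<in> Z"
    show "(if P z = 0 then 0 else P z * ln (P z / Q z)) \<le> P z * ln \<rho>"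
    proof (cases "P z = 0")
      case False
      then have "0 < P z / Q z" "P z / Q z \<le> \<rho>"
        using assms z by (auto simp: divide_le_eq less_le)
      then have "ln (P z / Q z) \<le> ln \<rho>" by simp
      then show ?thesis using False assms(1) z by (simp add: mult_left_mono)
    qed simp
  qed
  also have "\<dots> = ln \<rho>" using assms(3) by (simp flip: sum_distrib_right)
  finally show ?thesis .
qed

section \<open>Exponential bounds for product distributions\<close>

definition entropy_nats :: "('a::finite \<Rightarrow> real) \<Rightarrow> real" where
  "entropy_nats P = - (\<Sum>a\<in>UNIV. P a * ln (P a))"

lemma sum_iid_le_chernoff:
  fixes P :: "'a::finite \<Rightarrow> real"
  assumes P: "\<And>a. P a > 0" and c: "c > 0" and E: "E \<subseteq> seqs n"
    and large: "\<forall>z\<in>E. 1 \<le> (iid P z / c) powr u"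
  shows "(\<Sum>z\<in>E. iid P z) \<le> c powr (- u) * (\<Sum>a\<in>UNIV. P a powr (1 + u)) ^ n"
proof -
  have pos: "iid P z > 0" for z using P by (rule iid_pos)
  have "(\<Sum>z\<in>E. iid P z) \<le> (\<Sum>z\<in>E. iid P z * (iid P z / c) powr u)"
    using large pos by (intro sum_mono) (simp add: less_imp_le)
  also have "\<dots> \<le> (\<Sum>z\<in>seqs n. iid P z * (iid P z / c) powr u)"
    using E pos c by (intro sum_mono2) (auto intro!: mult_nonneg_nonneg simp: less_imp_le)
  also have "\<dots> = (\<Sum>z\<in>seqs n. c powr (- u) * iid (\<lambda>a. P a powr (1 + u)) z)"
  proof (intro sum.cong refl)
    fix z
    have "iid P z * (iid P z / c) powr u = c powr (- u) * iid P z powr (1 + u)"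
      using pos[of z] c by (simp add: powr_divide powr_minus powr_add field_simps)
    then show "iid P z * (iid P z / c) powr u = c powr (- u) * iid (\<lambda>a. P a powr (1 + u)) z"
      using P by (simp add: iid_powr)
  qed
  also have "\<dots> = c powr (- u) * (\<Sum>a\<in>UNIV. P a powr (1 + u)) ^ n"
    by (simp add: sum_iid_seqs flip: sum_distrib_left)
  finally show ?thesis .
qed

lemma moment_sum_entropy_has_derivative_0:
  fixes P :: "'a::finite \<Rightarrow> real"
  assumes P: "\<And>a. P a > 0" and sum_P: "(\<Sum>a\<in>UNIV. P a) = 1"
  shows "((\<lambda>u. (\<Sum>a\<in>UNIV. P a powr (1 + u)) * exp (u * entropy_nats P)) has_real_derivative 0) (at 0)"
proof -
  have "((\<lambda>u. (\<Sum>a\<in>UNIV. P a powr (1 + u)) * exp (u * entropy_nats P)) has_real_derivative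
        (\<Sum>a\<in>UNIV. P a powr (1 + 0) * ln (P a)) * exp (0 * entropy_nats P)
        + (\<Sum>a\<in>UNIV. P a powr (1 + 0)) * (exp (0 * entropy_nats P) * entropy_nats P)) (at 0)"
    using P by (auto intro!: derivative_eq_intros simp: abs_of_pos[OF P] mult.commute)
  also have "(\<Sum>a\<in>UNIV. P a powr (1 + 0) * ln (P a)) * exp (0 * entropy_nats P)
        + (\<Sum>a\<in>UNIV. P a powr (1 + 0)) * (exp (0 * entropy_nats P) * entropy_nats P) = 0"
    using sum_P by (simp add: entropy_nats_def abs_of_pos[OF P] mult.commute)
  finally show ?thesis .
qed

text \<open>The moment sum has logarithmic slope \<open>- entropy_nats P\<close> at \<open>u = 0\<close>; this is what makes the
  Chernoff exponent positive for every threshold strictly away from the entropy.\<close>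
lemma moment_sum_entropy_near_0:
  fixes P :: "'a::finite \<Rightarrow> real"
  assumes P: "\<And>a. P a > 0" and sum_P: "(\<Sum>a\<in>UNIV. P a) = 1" and \<delta>: "\<delta> > 0"
  shows "\<exists>t>0. (\<Sum>a\<in>UNIV. P a powr (1 + t)) * exp (t * entropy_nats P) < exp (t * \<delta>)
             \<and> (\<Sum>a\<in>UNIV. P a powr (1 - t)) * exp (- t * entropy_nats P) < exp (t * \<delta>)"
proof -
  define h where "h u = (\<Sum>a\<in>UNIV. P a powr (1 + u)) * exp (u * entropy_nats P)" for u
  have h0: "h 0 = 1" using sum_P by (simp add: h_def abs_of_pos[OF P])
  have "((\<lambda>u. (h u - h 0) / (u - 0)) \<longlongrightarrow> 0) (at 0)"
    using moment_sum_entropy_has_derivative_0[OF P sum_P]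
    by (simp add: h_def has_field_derivative_iff)
  then have "eventually (\<lambda>u. dist ((h u - h 0) / (u - 0)) 0 < \<delta>) (at 0)"
    using \<delta> by (rule tendstoD)
  then obtain r where r: "r > 0" "\<And>u. u \<noteq> 0 \<Longrightarrow> \<bar>u\<bar> < r \<Longrightarrow> \<bar>(h u - 1) / u\<bar> < \<delta>"
    unfolding eventually_at using h0 by auto
  have h_less: "h u < exp (\<bar>u\<bar> * \<delta>)" if "u \<noteq> 0" "\<bar>u\<bar> < r" for u
  proof -
    have "\<bar>h u - 1\<bar> < \<delta> * \<bar>u\<bar>" using r(2)[OF that] that by (simp add: abs_divide divide_less_eq)
    then have "h u < 1 + \<bar>u\<bar> * \<delta>" by (simp add: algebra_simps)
    also have "\<dots> \<le> exp (\<bar>u\<bar> * \<delta>)" by (rule exp_ge_add_one_self[THEN order_trans[rotated]]) simp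
    finally show ?thesis .
  qed
  show ?thesis
    using h_less[of "r / 2"] h_less[of "- r / 2"] r(1)
    by (intro exI[of _ "r / 2"]) (auto simp: h_def)
qed

lemma iid_prob_above_exp_tendsto_0:
  fixes P :: "'a::finite \<Rightarrow> real"
  assumes P: "\<And>a. P a > 0" and sum_P: "(\<Sum>a\<in>UNIV. P a) = 1" and a: "a < entropy_nats P"
  shows "(\<lambda>n. \<Sum>z\<in>{z\<in>seqs n. exp (- real n * a) < iid P z}. iid P z) \<longlonglongrightarrow> 0"
proof -
  define H where "H = entropy_nats P"
  obtain t where t: "t > 0" "(\<Sum>a\<in>UNIV. P a powr (1 + t)) * exp (t * H) < exp (t * (H - a))"
    using moment_sum_entropy_near_0[OF P sum_P, of "H - a"] a by (auto simp: H_def)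
  define r where "r = (\<Sum>a\<in>UNIV. P a powr (1 + t)) * exp (t * a)"
  have "r = (\<Sum>a\<in>UNIV. P a powr (1 + t)) * exp (t * H) * exp (- (t * (H - a)))"
    by (simp add: r_def algebra_simps flip: exp_add)
  also have "\<dots> < exp (t * (H - a)) * exp (- (t * (H - a)))"
    using t(2) by (intro mult_strict_right_mono) auto
  finally have r: "r < 1" by (simp flip: exp_add)
  have "\<bar>\<Sum>z\<in>{z\<in>seqs n. exp (- real n * a) < iid P z}. iid P z\<bar> \<le> r ^ n" for n
  proof -
    have "(\<Sum>z\<in>{z\<in>seqs n. exp (- real n * a) < iid P z}. iid P z)
          \<le> exp (- real n * a) powr (- t) * (\<Sum>a\<in>UNIV. P a powr (1 + t)) ^ n"
      using t(1) by (intro sum_iid_le_chernoff[OF P]) (auto intro!: ge_one_powr_ge_zero)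
    also have "\<dots> = r ^ n"
      by (simp add: r_def powr_def power_mult_distrib exp_of_nat_mult[symmetric] algebra_simps)
    finally show ?thesis using P by (simp add: iid_pos less_imp_le sum_nonneg)
  qed
  moreover have "r \<ge> 0" by (simp add: r_def sum_nonneg)
  ultimately show ?thesis
    using r by (intro Lim_null_comparison[OF always_eventually LIMSEQ_power_zero]) auto
qed

lemma iid_prob_below_exp_tendsto_0:
  fixes P :: "'a::finite \<Rightarrow> real"
  assumes P: "\<And>a. P a > 0" and sum_P: "(\<Sum>a\<in>UNIV. P a) = 1" and b: "entropy_nats P < b"
  shows "(\<lambda>n. \<Sum>z\<in>{z\<in>seqs n. iid P z < exp (- real n * b)}. iid P z) \<longlonglongrightarrow> 0"
proof -
  define H where "H = entropy_nats P"
  obtain t where t: "t > 0" "(\<Sum>a\<in>UNIV. P a powr (1 - t)) * exp (- t * H) < exp (t * (b - H))"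
    using moment_sum_entropy_near_0[OF P sum_P, of "b - H"] b by (auto simp: H_def)
  define r where "r = (\<Sum>a\<in>UNIV. P a powr (1 - t)) * exp (- t * b)"
  have "r = (\<Sum>a\<in>UNIV. P a powr (1 - t)) * exp (- t * H) * exp (- (t * (b - H)))"
    by (simp add: r_def algebra_simps flip: exp_add)
  also have "\<dots> < exp (t * (b - H)) * exp (- (t * (b - H)))"
    using t(2) by (intro mult_strict_right_mono) auto
  finally have r: "r < 1" by (simp flip: exp_add)
  have "\<bar>\<Sum>z\<in>{z\<in>seqs n. iid P z < exp (- real n * b)}. iid P z\<bar> \<le> r ^ n" for n
  proof -
    have "(\<Sum>z\<in>{z\<in>seqs n. iid P z < exp (- real n * b)}. iid P z)
          \<le> exp (- real n * b) powr (- (- t)) * (\<Sum>a\<in>UNIV. P a powr (1 + - t)) ^ n"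
    proof (intro sum_iid_le_chernoff[OF P] ballI)
      fix z assume "z \<in> {z\<in>seqs n. iid P z < exp (- real n * b)}"
      then have "iid P z / exp (- real n * b) < 1" "0 < iid P z / exp (- real n * b)"
        using P by (auto simp: iid_pos)
      then have "(iid P z / exp (- real n * b)) powr t \<le> 1"
        using t(1) P by (intro powr_le1) (auto simp: less_imp_le iid_pos abs_of_pos)
      then show "1 \<le> (iid P z / exp (- real n * b)) powr (- t)"
        unfolding powr_minus using \<open>0 < iid P z / exp (- real n * b)\<close>
        by (intro one_le_inverse) auto
    qed auto
    also have "\<dots> = r ^ n"
      by (simp add: r_def powr_def power_mult_distrib exp_of_nat_mult[symmetric] algebra_simps)
    finally show ?thesis using P by (simp add: iid_pos less_imp_le sum_nonneg)
  qed
  moreover have "r \<ge> 0" by (simp add: r_def sum_nonneg)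
  ultimately show ?thesis
    using r by (intro Lim_null_comparison[OF always_eventually LIMSEQ_power_zero]) auto
qed

lemma card_iid_ge_exp_le:
  fixes P :: "'a::finite \<Rightarrow> real"
  assumes P: "\<And>a. P a \<ge> 0" and sum_P: "(\<Sum>a\<in>UNIV. P a) = 1"
  shows "real (card {z\<in>seqs n. exp (- real n * b) \<le> iid P z}) \<le> exp (real n * b)"
proof -
  let ?A = "{z\<in>seqs n. exp (- real n * b) \<le> iid P z}"
  have "real (card ?A) * exp (- real n * b) = (\<Sum>z\<in>?A. exp (- real n * b))" by simp
  also have "\<dots> \<le> (\<Sum>z\<in>?A. iid P z)" by (intro sum_mono) auto
  also have "\<dots> \<le> (\<Sum>z\<in>seqs n. iid P z)"
    using P by (intro sum_mono2) (auto simp: iid_nonneg)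
  also have "\<dots> = 1" using sum_P by (simp add: sum_iid_seqs)
  finally show ?thesis by (simp add: exp_minus field_simps)
qed

lemma balanced_partition_exists:
  fixes w :: "'a \<Rightarrow> real"
  assumes fin: "finite G" and M: "M > 0" and \<epsilon>: "\<epsilon> \<ge> 0" and w: "\<forall>z\<in>G. 0 \<le> w z \<and> w z \<le> \<epsilon>"
  shows "\<exists>h. (\<forall>z\<in>G. h z < (M::nat)) \<and>
           (\<forall>i<M. \<forall>j<M. (\<Sum>z\<in>{z\<in>G. h z = i}. w z) \<le> (\<Sum>z\<in>{z\<in>G. h z = j}. w z) + \<epsilon>)"
  using fin w
proof (induction G rule: finite_induct)
  case empty
  show ?case using \<epsilon> M by (intro exI[of _ "\<lambda>_. 0"]) auto
next
  case (insert x F)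
  then obtain h where h: "\<forall>z\<in>F. h z < M"
    and balanced: "\<forall>i<M. \<forall>j<M. (\<Sum>z\<in>{z\<in>F. h z = i}. w z) \<le> (\<Sum>z\<in>{z\<in>F. h z = j}. w z) + \<epsilon>"
    by auto
  define c where "c i = (\<Sum>z\<in>{z\<in>F. h z = i}. w z)" for i
  \<comment> \<open>greedy step: the new point goes into a lightest part\<close>
  obtain i0 where i0: "i0 < M" "\<forall>j<M. c i0 \<le> c j"
  proof -
    have "Min (c ` {..<M}) \<in> c ` {..<M}" using M by (intro Min_in) auto
    then obtain i0 where "i0 < M" "c i0 = Min (c ` {..<M})" by auto
    then show ?thesis using that by simp
  qed
  define h' where "h' = h(x := i0)"
  have part: "(\<Sum>z\<in>{z\<in>insert x F. h' z = i}. w z) = c i + (if i = i0 then w x else 0)" for i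
  proof -
    have "{z\<in>insert x F. h' z = i} = (if i = i0 then insert x {z\<in>F. h z = i} else {z\<in>F. h z = i})"
      using insert.hyps(2) by (auto simp: h'_def)
    then show ?thesis using insert.hyps by (simp add: c_def)
  qed
  have w_x: "0 \<le> w x" "w x \<le> \<epsilon>" using insert.prems by auto
  show ?case
  proof (intro exI[of _ h'] conjI allI impI ballI)
    fix z assume "z \<in> insert x F"
    then show "h' z < M" using h i0 by (auto simp: h'_def)
  next
    fix i j assume "i < M" "j < M"
    then have "c i \<le> c j + \<epsilon>" "c i0 \<le> c j"
      using balanced i0 by (auto simp: c_def)
    then show "(\<Sum>z\<in>{z\<in>insert x F. h' z = i}. w z) \<le> (\<Sum>z\<in>{z\<in>insert x F. h' z = j}. w z) + \<epsilon>"
      unfolding part using w_x by auto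
  qed
qed

lemma sum_le_parts_mult_part:
  fixes w :: "'a \<Rightarrow> real"
  assumes "finite G" and "\<forall>z\<in>G. h z < (M::nat)"
    and "\<forall>i<M. (\<Sum>z\<in>{z\<in>G. h z = i}. w z) \<le> (\<Sum>z\<in>{z\<in>G. h z = j}. w z) + \<epsilon>"
  shows "(\<Sum>z\<in>G. w z) \<le> real M * ((\<Sum>z\<in>{z\<in>G. h z = j}. w z) + \<epsilon>)"
proof -
  have "(\<Sum>z\<in>G. w z) = (\<Sum>i<M. \<Sum>z\<in>{z\<in>G. h z = i}. w z)"
    using assms(1,2) by (intro sum.group[symmetric]) auto
  also have "\<dots> \<le> (\<Sum>i<M. (\<Sum>z\<in>{z\<in>G. h z = j}. w z) + \<epsilon>)"
    using assms(3) by (intro sum_mono) auto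
  finally show ?thesis by simp
qed

lemma sum_decoded_le_card:
  fixes d :: "'z \<Rightarrow> nat \<Rightarrow> nat"
  shows "(\<Sum>m<M. \<Sum>k<K. \<Sum>z\<in>A. if d z k = m then 1 else 0 :: real) \<le> real K * real (card A)"
proof -
  have "(\<Sum>m<M. \<Sum>k<K. \<Sum>z\<in>A. if d z k = m then 1 else 0 :: real)
      = (\<Sum>k<K. \<Sum>z\<in>A. \<Sum>m<M. if d z k = m then 1 else 0)"
    by (subst sum.swap) (intro sum.cong refl sum.swap)
  also have "\<dots> \<le> (\<Sum>k<K. \<Sum>z\<in>A. 1)"
    by (intro sum_mono) (simp add: sum.delta')
  finally show ?thesis by simp
qed

lemma sum_indicator_le:
  fixes P :: "'z \<Rightarrow> real"
  assumes "finite Z" "A \<subseteq> Z" "\<forall>z\<in>Z. 0 \<le> P z" "(\<Sum>z\<in>Z. P z) = 1"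
  shows "(\<Sum>z\<in>Z. P z * (if D z then 1 else 0)) \<le> (\<Sum>z\<in>A. if D z then 1 else 0) + (\<Sum>z\<in>Z - A. P z)"
proof -
  have "P z \<le> 1" if "z \<in> Z" for z
    using member_le_sum[of z Z P] assms that by auto
  moreover have "(\<Sum>z\<in>Z. P z * (if D z then 1 else 0))
      = (\<Sum>z\<in>A. P z * (if D z then 1 else 0)) + (\<Sum>z\<in>Z - A. P z * (if D z then 1 else 0))"
    using sum.subset_diff[OF assms(2,1)] by (simp add: add.commute)
  ultimately show ?thesis
    using assms(2,3) by (auto intro!: add_mono sum_mono)
qed

text \<open>A decoder recovers at most \<open>card A\<close> messages from outputs in \<open>A\<close>; all other successes
  are paid for by output mass outside \<open>A\<close>.\<close>
lemma avg_success_le: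
  fixes P :: "nat \<Rightarrow> nat \<Rightarrow> 'z \<Rightarrow> real" and d :: "'z \<Rightarrow> nat \<Rightarrow> nat"
  assumes Z: "finite Z" and A: "A \<subseteq> Z" and M: "M > 0" and K: "K > 0"
    and nonneg: "\<And>m k z. m < M \<Longrightarrow> k < K \<Longrightarrow> z \<in> Z \<Longrightarrow> 0 \<le> P m k z"
    and total: "\<And>m k. m < M \<Longrightarrow> k < K \<Longrightarrow> (\<Sum>z\<in>Z. P m k z) = 1"
  shows "1 - (\<Sum>m<M. \<Sum>k<K. 1 / (real M * real K) * (\<Sum>z\<in>Z. P m k z * (if d z k \<noteq> m then 1 else 0)))
         \<le> real (card A) / real M + (\<Sum>z\<in>Z - A. \<Sum>m<M. \<Sum>k<K. 1 / (real M * real K) * P m k z)"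
proof -
  define c where "c = 1 / (real M * real K)"
  have c: "c > 0" "(\<Sum>m<M. \<Sum>k<K. c) = 1" "c * (real K * real (card A)) = real (card A) / real M"
    using M K by (simp_all add: c_def)
  have success:
    "(\<Sum>z\<in>Z. P m k z * (if d z k = m then 1 else 0))
       \<le> (\<Sum>z\<in>A. if d z k = m then 1 else 0) + (\<Sum>z\<in>Z - A. P m k z)"
    if "m < M" "k < K" for m k
    using Z A nonneg[OF that] total[OF that] by (intro sum_indicator_le) auto
  have error: "(\<Sum>z\<in>Z. P m k z * (if d z k \<noteq> m then 1 else 0))
      = 1 - (\<Sum>z\<in>Z. P m k z * (if d z k = m then 1 else 0))" if "m < M" "k < K" for m k
  proof -
    have "(\<Sum>z\<in>Z. P m k z * (if d z k \<noteq> m then 1 else 0))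
        = (\<Sum>z\<in>Z. P m k z - P m k z * (if d z k = m then 1 else 0))"
      by (intro sum.cong refl) auto
    then show ?thesis using total[OF that] by (simp add: sum_subtractf)
  qed
  have "1 - (\<Sum>m<M. \<Sum>k<K. c * (\<Sum>z\<in>Z. P m k z * (if d z k \<noteq> m then 1 else 0)))
      = (\<Sum>m<M. \<Sum>k<K. c * (\<Sum>z\<in>Z. P m k z * (if d z k = m then 1 else 0)))"
    using c(2) by (simp add: error right_diff_distrib sum_subtractf)
  also have "\<dots> \<le> (\<Sum>m<M. \<Sum>k<K. c * ((\<Sum>z\<in>A. if d z k = m then 1 else 0) + (\<Sum>z\<in>Z - A. P m k z)))"
    using success c(1) by (intro sum_mono mult_left_mono) auto
  also have "\<dots> = c * (\<Sum>m<M. \<Sum>k<K. \<Sum>z\<in>A. if d z k = m then 1 else 0)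
                 + (\<Sum>m<M. \<Sum>k<K. \<Sum>z\<in>Z - A. c * P m k z)"
    by (simp add: distrib_left sum.distrib sum_distrib_left)
  also have "(\<Sum>m<M. \<Sum>k<K. \<Sum>z\<in>Z - A. c * P m k z) = (\<Sum>z\<in>Z - A. \<Sum>m<M. \<Sum>k<K. c * P m k z)"
    by (subst sum.swap) (intro sum.cong refl sum.swap)
  also have "c * (\<Sum>m<M. \<Sum>k<K. \<Sum>z\<in>A. if d z k = m then 1 else 0) \<le> c * (real K * real (card A))"
    using sum_decoded_le_card c(1) by (intro mult_left_mono) auto
  finally show ?thesis using c(3) by (simp add: c_def)
qed

section \<open>The modulo-2 additive channel\<close>

definition xor_list :: "bool list \<Rightarrow> bool list \<Rightarrow> bool list" where
  "xor_list x s = map2 (\<lambda>a b. a \<noteq> b) x s"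

lemma length_xor_list [simp]: "length (xor_list x s) = min (length x) (length s)"
  by (simp add: xor_list_def)

lemma xor_list_in_seqs [simp]: "x \<in> seqs n \<Longrightarrow> s \<in> seqs n \<Longrightarrow> xor_list x s \<in> seqs n"
  by (simp add: seqs_def)

lemma nth_xor_list: "i < length x \<Longrightarrow> i < length s \<Longrightarrow> xor_list x s ! i = (x ! i \<noteq> s ! i)"
  by (simp add: xor_list_def)

lemma xor_list_xor_list: "length x = length s \<Longrightarrow> xor_list (xor_list x s) s = x"
  by (auto simp: list_eq_iff_nth_eq nth_xor_list)

lemma take_xor_list: "take i (xor_list x s) = xor_list (take i x) (take i s)"
  by (simp add: xor_list_def take_map take_zip)

lemma sum_seqs_xor_list:
  assumes "s \<in> seqs n"
  shows "(\<Sum>x\<in>seqs n. f (xor_list x s)) = (\<Sum>z\<in>seqs n. f z)"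
  by (rule sum.reindex_bij_witness[where i = "\<lambda>z. xor_list z s" and j = "\<lambda>z. xor_list z s"])
     (use assms in \<open>auto simp: seqs_def xor_list_xor_list\<close>)

lemma sum_prefix_xor_list:
  assumes s: "s \<in> seqs n" and "i \<le> n" and u: "u \<in> seqs i"
  shows "(\<Sum>x\<in>{x\<in>seqs n. take i x = u}. f (xor_list x s))
       = (\<Sum>z\<in>{z\<in>seqs n. take i z = xor_list u (take i s)}. f z)"
proof (rule sum.reindex_bij_witness[where i = "\<lambda>z. xor_list z s" and j = "\<lambda>z. xor_list z s"])
  fix z assume z: "z \<in> {z\<in>seqs n. take i z = xor_list u (take i s)}"
  then show "xor_list (xor_list z s) s = z" using s by (simp add: seqs_def xor_list_xor_list)
  have "take i (xor_list z s) = xor_list (xor_list u (take i s)) (take i s)"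
    using z by (simp add: take_xor_list)
  also have "\<dots> = u" using u s \<open>i \<le> n\<close> by (intro xor_list_xor_list) (simp add: seqs_def)
  finally show "xor_list z s \<in> {x\<in>seqs n. take i x = u}" using z s by (simp add: seqs_def)
qed (use s in \<open>auto simp: seqs_def take_xor_list xor_list_xor_list\<close>)

lemma chan_n_xor_chan:
  assumes "s \<in> seqs n" "x \<in> seqs n" "y \<in> seqs n" "z \<in> seqs n"
  shows "chan_n xor_chan s x y z = (if y = xor_list x s \<and> z = xor_list x s then 1 else 0)"
proof (cases "y = xor_list x s \<and> z = xor_list x s")
  case True
  then show ?thesis using assms
    by (auto simp: chan_n_def xor_chan_def seqs_def nth_xor_list intro!: prod.neutral)
next
  case False
  then obtain i where "i < n" "y ! i \<noteq> xor_list x s ! i \<or> z ! i \<noteq> xor_list x s ! i"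
    using assms by (auto simp: seqs_def list_eq_iff_nth_eq)
  moreover have "xor_list x s ! i = (x ! i \<noteq> s ! i)"
    if "i < n" using assms that by (simp add: seqs_def nth_xor_list)
  ultimately have "chan_n xor_chan s x y z = 0"
    using assms unfolding chan_n_def by (auto simp: seqs_def xor_chan_def intro!: prod_zero bexI[of _ i])
  then show ?thesis using False by simp
qed

lemma sum_chan_n_xor_chan:
  assumes "s \<in> seqs n" "x \<in> seqs n" "z \<in> seqs n"
  shows "(\<Sum>y\<in>seqs n. c * chan_n xor_chan s x y z) = (if z = xor_list x s then c else 0)"
proof -
  have "(\<Sum>y\<in>seqs n. c * chan_n xor_chan s x y z)
      = (\<Sum>y\<in>seqs n. if y = xor_list x s then (if z = xor_list x s then c else 0) else 0)"
    using assms by (intro sum.cong refl) (auto simp: chan_n_xor_chan)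
  then show ?thesis using assms by simp
qed

lemma sum_sum_chan_n_xor_chan:
  assumes "s \<in> seqs n" "x \<in> seqs n"
  shows "(\<Sum>y\<in>seqs n. \<Sum>z\<in>seqs n. c * chan_n xor_chan s x y z * F y)
       = c * F (xor_list x s)"
proof -
  have "(\<Sum>z\<in>seqs n. c * chan_n xor_chan s x y z) = (if y = xor_list x s then c else 0)"
    if "y \<in> seqs n" for y
  proof -
    have "(\<Sum>z\<in>seqs n. c * chan_n xor_chan s x y z)
        = (\<Sum>z\<in>seqs n. if z = xor_list x s then (if y = xor_list x s then c else 0) else 0)"
      using assms that by (intro sum.cong refl) (auto simp: chan_n_xor_chan)
    then show ?thesis using assms by simp
  qed
  then have "(\<Sum>y\<in>seqs n. \<Sum>z\<in>seqs n. c * chan_n xor_chan s x y z * F y)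
      = (\<Sum>y\<in>seqs n. (if y = xor_list x s then c else 0) * F y)"
    by (simp flip: sum_distrib_right)
  also have "\<dots> = (\<Sum>y\<in>seqs n. if y = xor_list x s then c * F y else 0)"
    by (intro sum.cong refl) simp
  finally show ?thesis using assms by simp
qed

text \<open>Law of the common output Y^n = Z^n = X^n xor S^n when X^n is drawn from the kernel \<open>e\<close>.\<close>
definition xor_output :: "real \<Rightarrow> nat \<Rightarrow> (bool list \<Rightarrow> bool list \<Rightarrow> real) \<Rightarrow> bool list \<Rightarrow> real" where
  "xor_output p n e z =
     (\<Sum>s\<in>seqs n. \<Sum>x\<in>seqs n. iid (bern p) s * e s x * (if xor_list x s = z then 1 else 0))"

lemma sum_xor_output_mult:
  "(\<Sum>z\<in>seqs n. xor_output p n e z * g z)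
     = (\<Sum>s\<in>seqs n. \<Sum>x\<in>seqs n. iid (bern p) s * e s x * g (xor_list x s))"
proof -
  have "(\<Sum>z\<in>seqs n. xor_output p n e z * g z)
     = (\<Sum>z\<in>seqs n. \<Sum>s\<in>seqs n. \<Sum>x\<in>seqs n. iid (bern p) s * e s x * (if xor_list x s = z then g z else 0))"
    unfolding xor_output_def sum_distrib_right by (intro sum.cong refl) auto
  also have "\<dots> = (\<Sum>s\<in>seqs n. \<Sum>x\<in>seqs n. \<Sum>z\<in>seqs n.
        iid (bern p) s * e s x * (if xor_list x s = z then g z else 0))"
    by (subst sum.swap) (intro sum.cong refl sum.swap)
  also have "\<dots> = (\<Sum>s\<in>seqs n. \<Sum>x\<in>seqs n. iid (bern p) s * e s x * g (xor_list x s))"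
    by (intro sum.cong refl) (simp flip: sum_distrib_left)
  finally show ?thesis .
qed

lemma sum_bern [simp]: "(\<Sum>a\<in>UNIV. bern p a) = 1"
  by (simp add: UNIV_bool bern_def)

lemma bern_pos: "0 < p \<Longrightarrow> p < 1 \<Longrightarrow> bern p a > 0"
  by (simp add: bern_def)

lemma xor_output_nonneg:
  assumes "0 \<le> p" "p \<le> 1" "\<forall>s\<in>seqs n. \<forall>x. 0 \<le> e s x"
  shows "0 \<le> xor_output p n e z"
  unfolding xor_output_def using assms
  by (intro sum_nonneg mult_nonneg_nonneg iid_nonneg) (auto simp: bern_def)

lemma sum_xor_output:
  assumes "\<forall>s\<in>seqs n. (\<Sum>x\<in>seqs n. e s x) = 1"
  shows "(\<Sum>z\<in>seqs n. xor_output p n e z) = 1"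
  using sum_xor_output_mult[where g = "\<lambda>_. 1"] assms
  by (simp add: sum_iid_seqs flip: sum_distrib_left)

lemma err_prob_xor_chan:
  "err_prob (bern p) xor_chan n M K enc dec =
     (\<Sum>m<M. \<Sum>k<K. 1 / (real M * real K) *
        (\<Sum>z\<in>seqs n. xor_output p n (enc m k) z * (if dec z k \<noteq> m then 1 else 0)))"
  unfolding err_prob_def sum_xor_output_mult joint_def sum_distrib_left
proof (intro sum.cong refl)
  fix m k :: nat and s x :: "bool list" assume "s \<in> seqs n" "x \<in> seqs n"
  from sum_sum_chan_n_xor_chan[OF this, of "1 / (real M * real K) * iid (bern p) s * enc m k s x"
      "\<lambda>y. if dec y k \<noteq> m then 1 else 0"]
  show "(\<Sum>y\<in>seqs n. \<Sum>z\<in>seqs n. 1 / (real M * real K) * iid (bern p) s * enc m k s x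
               * chan_n xor_chan s x y z * (if dec y k \<noteq> m then 1 else 0))
     = 1 / (real M * real K) * (iid (bern p) s * enc m k s x
         * (if dec (xor_list x s) k \<noteq> m then 1 else 0))"
    by simp
qed

lemma warden_out_xor_chan:
  assumes "z \<in> seqs n"
  shows "warden_out (bern p) xor_chan n M K enc z =
     (\<Sum>m<M. \<Sum>k<K. 1 / (real M * real K) * xor_output p n (enc m k) z)"
  unfolding warden_out_def joint_def xor_output_def sum_distrib_left
proof (intro sum.cong refl)
  fix m k :: nat and s x :: "bool list" assume "s \<in> seqs n" "x \<in> seqs n"
  from sum_chan_n_xor_chan[OF this assms, of "1 / (real M * real K) * iid (bern p) s * enc m k s x"]
  show "(\<Sum>y\<in>seqs n. 1 / (real M * real K) * iid (bern p) s * enc m k s x * chan_n xor_chan s x y z)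
      = 1 / (real M * real K) * (iid (bern p) s * enc m k s x * (if xor_list x s = z then 1 else 0))"
    by auto
qed

lemma Q0_xor_chan: "Q0 (bern p) xor_chan False = bern p"
  by (rule ext) (simp add: Q0_def UNIV_bool xor_chan_def bern_def)

lemma num_keys_pos: "0 \<le> RK \<Longrightarrow> num_keys n RK > 0"
  by (simp add: num_keys_def one_le_floor ge_one_powr_ge_zero)

lemma num_msgs_ge: "real (num_msgs n R) \<ge> 2 powr (real n * R)"
  unfolding num_msgs_def by (simp add: le_of_int_ceiling order_trans[OF _ le_of_int_ceiling])

lemma num_msgs_le: "real (num_msgs n R) \<le> 2 powr (real n * R) + 1"
proof -
  have "- 1 < (2::real) powr (real n * R)"
    using powr_gt_zero[of 2 "real n * R"] by linarith
  then have "0 \<le> \<lceil>2 powr (real n * R)\<rceil>" by simp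
  then show ?thesis unfolding num_msgs_def by simp
qed

lemma num_msgs_pos: "num_msgs n R > 0"
  using num_msgs_ge[of n R] powr_gt_zero[of 2 "real n * R"] by linarith

lemma warden_out_nonneg:
  assumes "0 < p" "p < 1" and "valid_encoder n M K e" and "z \<in> seqs n"
  shows "0 \<le> warden_out (bern p) xor_chan n M K e z"
  using assms unfolding valid_encoder_def
  by (auto simp: warden_out_xor_chan intro!: sum_nonneg divide_nonneg_nonneg xor_output_nonneg)

lemma sum_warden_out:
  assumes "M > 0" "K > 0" and "valid_encoder n M K e"
  shows "(\<Sum>z\<in>seqs n. warden_out (bern p) xor_chan n M K e z) = 1"
proof -
  have "(\<Sum>z\<in>seqs n. warden_out (bern p) xor_chan n M K e z)
      = (\<Sum>m<M. \<Sum>k<K. 1 / (real M * real K) * (\<Sum>z\<in>seqs n. xor_output p n (e m k) z))"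
    by (simp add: warden_out_xor_chan sum_distrib_left sum.swap[of _ "seqs n"])
  also have "\<dots> = (\<Sum>m<M. \<Sum>k<K. 1 / (real M * real K))"
    using assms(3) by (intro sum.cong refl) (simp add: valid_encoder_def sum_xor_output)
  finally show ?thesis using assms(1,2) by simp
qed

section \<open>Converse\<close>

lemma Hb_eq_entropy_nats: "0 < p \<Longrightarrow> p < 1 \<Longrightarrow> Hb p = entropy_nats (bern p) / ln 2"
  by (simp add: Hb_def entropy_nats_def UNIV_bool bern_def log_def ln_div divide_simps)

lemma entropy_nats_bern_pos: "0 < p \<Longrightarrow> p < 1 \<Longrightarrow> entropy_nats (bern p) > 0"
proof -
  assume "0 < p" "p < 1"
  then have "p * ln p < 0" "(1 - p) * ln (1 - p) < 0" by (simp_all add: mult_pos_neg)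
  then show ?thesis by (simp add: entropy_nats_def UNIV_bool bern_def)
qed

lemma xor_chan_success_le:
  assumes p: "0 < p" "p < 1" and RK: "0 \<le> RK"
    and valid: "valid_encoder n (num_msgs n R) (num_keys n RK) e"
  defines "W \<equiv> warden_out (bern p) xor_chan n (num_msgs n R) (num_keys n RK) e"
  shows "1 - err_prob (bern p) xor_chan n (num_msgs n R) (num_keys n RK) e d
     \<le> exp (real n * b) / 2 powr (real n * R) + kl_div W (iid (bern p)) (seqs n)
       + exp 1 * (\<Sum>z\<in>{z\<in>seqs n. iid (bern p) z < exp (- real n * b)}. iid (bern p) z)"
proof -
  let ?M = "num_msgs n R" and ?K = "num_keys n RK" and ?Q = "iid (bern p)"
  define A where "A = {z\<in>seqs n. exp (- real n * b) \<le> ?Q z}"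
  have E: "seqs n - A = {z\<in>seqs n. ?Q z < exp (- real n * b)}" by (auto simp: A_def)
  have M: "?M > 0" and K: "?K > 0" using RK by (simp_all add: num_msgs_pos num_keys_pos)
  have Q: "\<forall>z\<in>seqs n. ?Q z > 0" using p by (simp add: iid_pos bern_pos)
  have "1 - err_prob (bern p) xor_chan n ?M ?K e d
      \<le> real (card A) / real ?M
        + (\<Sum>z\<in>seqs n - A. \<Sum>m<?M. \<Sum>k<?K. 1 / (real ?M * real ?K) * xor_output p n (e m k) z)"
    unfolding err_prob_xor_chan using valid p M K
    by (intro avg_success_le) (auto simp: A_def valid_encoder_def xor_output_nonneg sum_xor_output)
  also have "(\<Sum>z\<in>seqs n - A. \<Sum>m<?M. \<Sum>k<?K. 1 / (real ?M * real ?K) * xor_output p n (e m k) z)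
      = (\<Sum>z\<in>seqs n - A. W z)"
    by (intro sum.cong refl) (simp add: W_def warden_out_xor_chan)
  also have "real (card A) / real ?M \<le> exp (real n * b) / 2 powr (real n * R)"
  proof (rule frac_le)
    show "real (card A) \<le> exp (real n * b)"
      unfolding A_def using p by (intro card_iid_ge_exp_le) (auto simp: bern_def UNIV_bool)
  qed (use num_msgs_ge[of n R] in auto)
  also have "(\<Sum>z\<in>seqs n - A. W z) \<le> kl_div W ?Q (seqs n) + exp 1 * (\<Sum>z\<in>seqs n - A. ?Q z)"
    using kl_div_ge_event[of "seqs n" "seqs n - A" W ?Q 1] Q
          warden_out_nonneg[OF p valid] sum_warden_out[OF M K valid]
    by (simp add: W_def sum_iid_seqs)
  finally show ?thesis unfolding E by simp
qed

lemma exp_mult_div_two_powr_tendsto_0: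
  assumes "b < R * ln 2"
  shows "(\<lambda>n. exp (real n * b) / 2 powr (real n * R)) \<longlonglongrightarrow> 0"
proof -
  have "exp (real n * b) / 2 powr (real n * R) = exp (b - R * ln 2) ^ n" for n
    by (simp add: powr_def exp_of_nat_mult[symmetric] algebra_simps flip: exp_diff)
  moreover have "exp (b - R * ln 2) < 1" using assms by simp
  ultimately show ?thesis by (simp add: LIMSEQ_power_zero)
qed

lemma covert_achievable_le_Hb:
  assumes p: "0 < p" "p < 1" and RK: "0 \<le> RK"
    and achievable: "covert_achievable causal (bern p) xor_chan False (\<lambda>_. 0) 0 RK R"
  shows "R \<le> Hb p"
proof (rule ccontr)
  let ?H = "entropy_nats (bern p)"
  assume "\<not> R \<le> Hb p"
  then have H_less: "?H < R * ln 2"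
    using Hb_eq_entropy_nats[OF p] by (simp add: not_le pos_divide_less_eq)
  define b where "b = (?H + R * ln 2) / 2"
  obtain enc dec where valid: "\<And>n. valid_encoder n (num_msgs n R) (num_keys n RK) (enc n)"
    and err: "(\<lambda>n. err_prob (bern p) xor_chan n (num_msgs n R) (num_keys n RK) (enc n) (dec n)) \<longlonglongrightarrow> 0"
    and covert: "(\<lambda>n. rel_entropy (warden_out (bern p) xor_chan n (num_msgs n R) (num_keys n RK) (enc n))
                          (iid (bern p)) (seqs n)) \<longlonglongrightarrow> 0"
    using achievable unfolding covert_achievable_def Q0_xor_chan by blast
  have kl: "(\<lambda>n. kl_div (warden_out (bern p) xor_chan n (num_msgs n R) (num_keys n RK) (enc n))
                      (iid (bern p)) (seqs n)) \<longlonglongrightarrow> 0"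
    using covert p by (subst (asm) rel_entropy_tendsto_0_iff) (auto simp: iid_pos bern_pos)
  have codebook: "(\<lambda>n. exp (real n * b) / 2 powr (real n * R)) \<longlonglongrightarrow> 0"
    using H_less by (intro exp_mult_div_two_powr_tendsto_0) (simp add: b_def)
  have rare: "(\<lambda>n. \<Sum>z\<in>{z\<in>seqs n. iid (bern p) z < exp (- real n * b)}. iid (bern p) z) \<longlonglongrightarrow> 0"
    using H_less p by (intro iid_prob_below_exp_tendsto_0) (auto simp: b_def bern_pos)
  have success: "(\<lambda>n. 1 - err_prob (bern p) xor_chan n (num_msgs n R) (num_keys n RK) (enc n) (dec n))
    \<longlonglongrightarrow> 1"
    using tendsto_diff[OF tendsto_const err] by simp
  have bound: "(\<lambda>n. exp (real n * b) / 2 powr (real n * R)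
      + kl_div (warden_out (bern p) xor_chan n (num_msgs n R) (num_keys n RK) (enc n))
          (iid (bern p)) (seqs n)
      + exp 1 * (\<Sum>z\<in>{z\<in>seqs n. iid (bern p) z < exp (- real n * b)}. iid (bern p) z)) \<longlonglongrightarrow> 0"
    using tendsto_add[OF tendsto_add[OF codebook kl] tendsto_mult_right_zero[OF rare]] by simp
  have "1 \<le> (0::real)"
    by (rule tendsto_le[OF trivial_limit_sequentially bound success])
       (use xor_chan_success_le[OF p RK valid] in simp)
  then show False by simp
qed

section \<open>Achievability\<close>

text \<open>Message m is sent as X^n = Z^n xor S^n with Z^n drawn from Q0^n conditioned on cell m of a
  balanced partition of the low-probability sequences.\<close>

definition low_prob_seqs :: "real \<Rightarrow> real \<Rightarrow> nat \<Rightarrow> bool list set" where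
  "low_prob_seqs p a n = {z\<in>seqs n. iid (bern p) z \<le> exp (- real n * a)}"

definition cell_index :: "real \<Rightarrow> real \<Rightarrow> real \<Rightarrow> nat \<Rightarrow> bool list \<Rightarrow> nat" where
  "cell_index p a R n = (SOME h. (\<forall>z\<in>low_prob_seqs p a n. h z < num_msgs n R) \<and>
      (\<forall>i<num_msgs n R. \<forall>j<num_msgs n R.
         (\<Sum>z\<in>{z\<in>low_prob_seqs p a n. h z = i}. iid (bern p) z)
           \<le> (\<Sum>z\<in>{z\<in>low_prob_seqs p a n. h z = j}. iid (bern p) z) + exp (- real n * a)))"

definition cell_mass :: "real \<Rightarrow> real \<Rightarrow> real \<Rightarrow> nat \<Rightarrow> nat \<Rightarrow> real" where
  "cell_mass p a R n m = (\<Sum>z\<in>{z\<in>low_prob_seqs p a n. cell_index p a R n z = m}. iid (bern p) z)"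

definition cell_dist :: "real \<Rightarrow> real \<Rightarrow> real \<Rightarrow> nat \<Rightarrow> nat \<Rightarrow> bool list \<Rightarrow> real" where
  "cell_dist p a R n m z =
     (if 0 < cell_mass p a R n m
      then (if z \<in> low_prob_seqs p a n \<and> cell_index p a R n z = m
            then iid (bern p) z / cell_mass p a R n m else 0)
      else (if z = replicate n False then 1 else 0))"

definition cell_encoder :: "real \<Rightarrow> real \<Rightarrow> real \<Rightarrow> nat \<Rightarrow> nat \<Rightarrow> nat \<Rightarrow> bool list \<Rightarrow> bool list \<Rightarrow> real" where
  "cell_encoder p a R n m k s x =
     (if s \<in> seqs n \<and> x \<in> seqs n then cell_dist p a R n m (xor_list x s) else 0)"

definition cell_decoder :: "real \<Rightarrow> real \<Rightarrow> real \<Rightarrow> nat \<Rightarrow> bool list \<Rightarrow> nat \<Rightarrow> nat" where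
  "cell_decoder p a R n z k = cell_index p a R n z"

context
  fixes p a R :: real
  assumes p: "0 < p" "p < 1"
begin

lemma iid_bern_pos: "iid (bern p) z > 0"
  using p by (intro iid_pos bern_pos)

lemma cell_index_balanced:
  "(\<forall>z\<in>low_prob_seqs p a n. cell_index p a R n z < num_msgs n R) \<and>
   (\<forall>i<num_msgs n R. \<forall>j<num_msgs n R.
      (\<Sum>z\<in>{z\<in>low_prob_seqs p a n. cell_index p a R n z = i}. iid (bern p) z)
        \<le> (\<Sum>z\<in>{z\<in>low_prob_seqs p a n. cell_index p a R n z = j}. iid (bern p) z) + exp (- real n * a))"
proof -
  have "\<exists>h. (\<forall>z\<in>low_prob_seqs p a n. h z < num_msgs n R) \<and>
    (\<forall>i<num_msgs n R. \<forall>j<num_msgs n R.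
      (\<Sum>z\<in>{z\<in>low_prob_seqs p a n. h z = i}. iid (bern p) z)
        \<le> (\<Sum>z\<in>{z\<in>low_prob_seqs p a n. h z = j}. iid (bern p) z) + exp (- real n * a))"
    by (intro balanced_partition_exists)
       (auto simp: low_prob_seqs_def num_msgs_pos iid_bern_pos less_imp_le)
  then show ?thesis unfolding cell_index_def by (rule someI_ex)
qed

lemma sum_low_prob_seqs_le_cell_mass:
  assumes "m < num_msgs n R"
  shows "(\<Sum>z\<in>low_prob_seqs p a n. iid (bern p) z)
       \<le> real (num_msgs n R) * (cell_mass p a R n m + exp (- real n * a))"
  unfolding cell_mass_def using cell_index_balanced assms
  by (intro sum_le_parts_mult_part) (auto simp: low_prob_seqs_def)

lemma cell_dist_nonneg: "cell_dist p a R n m z \<ge> 0"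
  unfolding cell_dist_def using iid_bern_pos[of z] by (auto simp: less_imp_le)

lemma sum_cell_dist: "(\<Sum>z\<in>seqs n. cell_dist p a R n m z) = 1"
proof (cases "0 < cell_mass p a R n m")
  case True
  have "(\<Sum>z\<in>seqs n. cell_dist p a R n m z) = (\<Sum>z\<in>seqs n.
      if z \<in> {z\<in>low_prob_seqs p a n. cell_index p a R n z = m}
      then iid (bern p) z / cell_mass p a R n m else 0)"
    unfolding cell_dist_def using True by (intro sum.cong refl) auto
  also have "\<dots> = (\<Sum>z\<in>{z\<in>low_prob_seqs p a n. cell_index p a R n z = m}.
        iid (bern p) z / cell_mass p a R n m)"
    by (subst sum.If_cases) (auto simp: low_prob_seqs_def intro!: sum.cong)
  also have "\<dots> = 1" using True by (simp add: cell_mass_def flip: sum_divide_distrib)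
  finally show ?thesis .
next
  case False
  have "replicate n False \<in> seqs n" by (simp add: seqs_def)
  then show ?thesis using False by (simp add: cell_dist_def)
qed

lemma valid_cell_encoder: "valid_encoder n M K (cell_encoder p a R n)"
  unfolding valid_encoder_def
  by (simp add: cell_encoder_def cell_dist_nonneg sum_seqs_xor_list sum_cell_dist cong: sum.cong)

lemma causal_cell_encoder: "causal_encoder n M K (cell_encoder p a R n)"
  unfolding causal_encoder_def
proof (intro allI impI ballI)
  fix m k i and s s' u :: "bool list"
  assume s: "s \<in> seqs n" and s': "s' \<in> seqs n" and "i \<le> n" and prefix: "take i s = take i s'"
    and u: "u \<in> seqs i"
  have encoder: "(\<Sum>x\<in>{x\<in>seqs n. take i x = u}. cell_encoder p a R n m k s x)
      = (\<Sum>z\<in>{z\<in>seqs n. take i z = xor_list u (take i s)}. cell_dist p a R n m z)"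
    if "s \<in> seqs n" for s
  proof -
    have "(\<Sum>x\<in>{x\<in>seqs n. take i x = u}. cell_encoder p a R n m k s x)
        = (\<Sum>x\<in>{x\<in>seqs n. take i x = u}. cell_dist p a R n m (xor_list x s))"
      using that by (intro sum.cong) (auto simp: cell_encoder_def)
    then show ?thesis using sum_prefix_xor_list[OF that \<open>i \<le> n\<close> u] by simp
  qed
  show "(\<Sum>x\<in>{x\<in>seqs n. take i x = u}. cell_encoder p a R n m k s x)
      = (\<Sum>x\<in>{x\<in>seqs n. take i x = u}. cell_encoder p a R n m k s' x)"
    using encoder[OF s] encoder[OF s'] prefix by simp
qed

lemma xor_output_cell_encoder:
  assumes "z \<in> seqs n"
  shows "xor_output p n (cell_encoder p a R n m k) z = cell_dist p a R n m z"
proof -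
  have "xor_output p n (cell_encoder p a R n m k) z
      = (\<Sum>s\<in>seqs n. iid (bern p) s *
           (\<Sum>x\<in>seqs n. if xor_list x s = z then cell_dist p a R n m (xor_list x s) else 0))"
    unfolding xor_output_def
    by (intro sum.cong refl) (auto simp: cell_encoder_def sum_distrib_left intro!: sum.cong)
  also have "\<dots> = (\<Sum>s\<in>seqs n. iid (bern p) s * cell_dist p a R n m z)"
    using assms by (intro sum.cong refl)
      (simp add: sum_seqs_xor_list[where f = "\<lambda>z'. if z' = z then cell_dist p a R n m z' else 0"])
  also have "\<dots> = cell_dist p a R n m z"
    by (simp add: sum_iid_seqs flip: sum_distrib_right)
  finally show ?thesis .
qed

lemma err_prob_cell_code_eq_0:
  assumes "\<forall>m<num_msgs n R. 0 < cell_mass p a R n m"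
  shows "err_prob (bern p) xor_chan n (num_msgs n R) K (cell_encoder p a R n) (cell_decoder p a R n) = 0"
  unfolding err_prob_xor_chan using assms
  by (intro sum.neutral ballI)
     (auto simp: xor_output_cell_encoder cell_dist_def cell_decoder_def intro!: sum.neutral)

lemma warden_out_cell_encoder_le:
  assumes "K > 0" and "\<eta> < 1" and "z \<in> seqs n"
    and balanced: "\<forall>m<num_msgs n R. 1 - \<eta> \<le> real (num_msgs n R) * cell_mass p a R n m"
  shows "warden_out (bern p) xor_chan n (num_msgs n R) K (cell_encoder p a R n) z
       \<le> iid (bern p) z / (1 - \<eta>)"
proof -
  let ?M = "num_msgs n R"
  have bound: "cell_dist p a R n m z
      \<le> (if cell_index p a R n z = m then real ?M * iid (bern p) z / (1 - \<eta>) else 0)"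
    if "m < ?M" for m
  proof -
    have pos: "0 < 1 - \<eta>" and le: "1 - \<eta> \<le> real ?M * cell_mass p a R n m"
      using assms that by auto
    then have mass: "0 < cell_mass p a R n m"
      using zero_less_mult_iff[of "real ?M" "cell_mass p a R n m"] by simp
    have "iid (bern p) z * (1 - \<eta>) \<le> iid (bern p) z * (real ?M * cell_mass p a R n m)"
      using le iid_bern_pos[of z] by (intro mult_left_mono) auto
    then show ?thesis
      using pos mass iid_bern_pos[of z] by (auto simp: cell_dist_def field_simps)
  qed
  have "1 / real ?M * cell_dist p a R n m z
      \<le> (if cell_index p a R n z = m then iid (bern p) z / (1 - \<eta>) else 0)"
    if "m < ?M" for m
    using mult_left_mono[OF bound[OF that], of "1 / real ?M"] num_msgs_pos[of n R]
    by (simp split: if_splits)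
  then have "(\<Sum>m<?M. 1 / real ?M * cell_dist p a R n m z)
      \<le> (\<Sum>m<?M. if cell_index p a R n z = m then iid (bern p) z / (1 - \<eta>) else 0)"
    by (intro sum_mono) simp
  also have "\<dots> \<le> iid (bern p) z / (1 - \<eta>)"
    using iid_bern_pos[of z] assms(2) by simp
  finally show ?thesis
    using assms(1,3) by (simp add: warden_out_xor_chan xor_output_cell_encoder)
qed

end

lemma num_msgs_mult_exp_tendsto_0:
  assumes "0 < a" "R * ln 2 < a"
  shows "(\<lambda>n. real (num_msgs n R) * exp (- real n * a)) \<longlonglongrightarrow> 0"
proof (rule Lim_null_comparison[OF always_eventually])
  show "\<forall>n. norm (real (num_msgs n R) * exp (- real n * a)) \<le> exp (R * ln 2 - a) ^ n + exp (- a) ^ n"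
  proof
    fix n
    have "norm (real (num_msgs n R) * exp (- real n * a))
      \<le> (2 powr (real n * R) + 1) * exp (- real n * a)"
      using num_msgs_le[of n R] by (simp add: mult_right_mono)
    also have "\<dots> = exp (R * ln 2 - a) ^ n + exp (- a) ^ n"
      by (simp add: powr_def distrib_right exp_of_nat_mult[symmetric] flip: exp_add)
         (simp add: algebra_simps)
    finally show "norm (real (num_msgs n R) * exp (- real n * a))
      \<le> exp (R * ln 2 - a) ^ n + exp (- a) ^ n" .
  qed
  show "(\<lambda>n. exp (R * ln 2 - a) ^ n + exp (- a) ^ n) \<longlonglongrightarrow> 0"
    using assms by (intro tendsto_add_zero LIMSEQ_power_zero) auto
qed

lemma cell_mass_asymptotically_uniform:
  assumes p: "0 < p" "p < 1" and a: "0 < a" "R * ln 2 < a" "a < entropy_nats (bern p)"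
  defines "\<eta> \<equiv> \<lambda>n. (\<Sum>z\<in>seqs n - low_prob_seqs p a n. iid (bern p) z)
                    + real (num_msgs n R) * exp (- real n * a)"
  shows "\<eta> \<longlonglongrightarrow> 0"
    and "m < num_msgs n R \<Longrightarrow> 1 - \<eta> n \<le> real (num_msgs n R) * cell_mass p a R n m"
proof -
  have high: "seqs n - low_prob_seqs p a n = {z\<in>seqs n. exp (- real n * a) < iid (bern p) z}" for n
    by (auto simp: low_prob_seqs_def)
  show "\<eta> \<longlonglongrightarrow> 0"
    unfolding \<eta>_def high using p a
    by (intro tendsto_add_zero iid_prob_above_exp_tendsto_0 num_msgs_mult_exp_tendsto_0)
       (auto simp: bern_pos)
  assume "m < num_msgs n R"
  moreover have "(\<Sum>z\<in>seqs n. iid (bern p) z)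
      = (\<Sum>z\<in>seqs n - low_prob_seqs p a n. iid (bern p) z) + (\<Sum>z\<in>low_prob_seqs p a n. iid (bern p) z)"
    by (rule sum.subset_diff) (auto simp: low_prob_seqs_def)
  ultimately show "1 - \<eta> n \<le> real (num_msgs n R) * cell_mass p a R n m"
    using sum_low_prob_seqs_le_cell_mass[OF p, of m n R a]
    by (simp add: \<eta>_def sum_iid_seqs algebra_simps)
qed

lemma cell_code_err_prob_tendsto_0:
  assumes p: "0 < p" "p < 1" and "\<eta> \<longlonglongrightarrow> 0"
    and balanced: "\<And>n m. m < num_msgs n R \<Longrightarrow> 1 - \<eta> n \<le> real (num_msgs n R) * cell_mass p a R n m"
  shows "(\<lambda>n. err_prob (bern p) xor_chan n (num_msgs n R) (K n) (cell_encoder p a R n)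
           (cell_decoder p a R n))
           \<longlonglongrightarrow> 0"
proof (rule tendsto_eventually)
  have "eventually (\<lambda>n. \<eta> n < 1) sequentially"
    using \<open>\<eta> \<longlonglongrightarrow> 0\<close> by (rule order_tendstoD) simp
  then show "eventually (\<lambda>n. err_prob (bern p) xor_chan n (num_msgs n R) (K n) (cell_encoder p a R n)
                          (cell_decoder p a R n) = 0) sequentially"
  proof eventually_elim
    case (elim n)
    then have "0 < real (num_msgs n R) * cell_mass p a R n m" if "m < num_msgs n R" for m
      using balanced[OF that] by linarith
    then show ?case
      by (intro err_prob_cell_code_eq_0[OF p]) (simp add: zero_less_mult_iff)
  qed
qed

lemma cell_code_kl_div_tendsto_0:
  assumes p: "0 < p" "p < 1" and RK: "0 \<le> RK" and "\<eta> \<longlonglongrightarrow> 0"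
    and balanced: "\<And>n m. m < num_msgs n R \<Longrightarrow> 1 - \<eta> n \<le> real (num_msgs n R) * cell_mass p a R n m"
  defines "W \<equiv> \<lambda>n. warden_out (bern p) xor_chan n (num_msgs n R) (num_keys n RK) (cell_encoder p a R n)"
  shows "(\<lambda>n. kl_div (W n) (iid (bern p)) (seqs n)) \<longlonglongrightarrow> 0"
proof -
  have W: "\<forall>z\<in>seqs n. 0 \<le> W n z" "(\<Sum>z\<in>seqs n. W n z) = 1" "\<forall>z\<in>seqs n. 0 < iid (bern p) z" for n
    using warden_out_nonneg[OF p valid_cell_encoder[OF p]] iid_bern_pos[OF p]
      sum_warden_out[OF num_msgs_pos num_keys_pos[OF RK] valid_cell_encoder[OF p]]
    by (auto simp: W_def)
  have "eventually (\<lambda>n. \<eta> n < 1) sequentially"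
    using \<open>\<eta> \<longlonglongrightarrow> 0\<close> by (rule order_tendstoD) simp
  then have upper: "eventually (\<lambda>n. kl_div (W n) (iid (bern p)) (seqs n) \<le> ln (1 / (1 - \<eta> n))) sequentially"
  proof eventually_elim
    case (elim n)
    then show ?case
      using W warden_out_cell_encoder_le[OF p num_keys_pos[OF RK] elim] balanced
      by (intro kl_div_le_ln_of_le) (auto simp: W_def)
  qed
  have lower: "eventually (\<lambda>n. 0 \<le> kl_div (W n) (iid (bern p)) (seqs n)) sequentially"
    using W by (intro always_eventually allI kl_div_nonneg) (auto simp: sum_iid_seqs)
  have "(\<lambda>n. ln (1 / (1 - \<eta> n))) \<longlonglongrightarrow> ln (1 / (1 - 0))"
    by (intro tendsto_intros \<open>\<eta> \<longlonglongrightarrow> 0\<close>) auto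
  then show ?thesis
    by (intro tendsto_sandwich[OF lower upper tendsto_const]) simp
qed

lemma covert_achievable_below_Hb:
  assumes p: "0 < p" "p < 1" and R: "0 < R" "R < Hb p" and RK: "0 \<le> RK"
  shows "covert_achievable True (bern p) xor_chan False (\<lambda>_. 0) 0 RK R"
proof -
  define a where "a = (R * ln 2 + entropy_nats (bern p)) / 2"
  have "0 < R * ln 2" "R * ln 2 < entropy_nats (bern p)"
    using R Hb_eq_entropy_nats[OF p] by (auto simp: pos_less_divide_eq)
  then have a: "0 < a" "R * ln 2 < a" "a < entropy_nats (bern p)"
    unfolding a_def by auto
  define \<eta> where "\<eta> n = (\<Sum>z\<in>seqs n - low_prob_seqs p a n. iid (bern p) z)
                    + real (num_msgs n R) * exp (- real n * a)" for n
  have \<eta>: "\<eta> \<longlonglongrightarrow> 0" "\<And>n m. m < num_msgs n R \<Longrightarrow> 1 - \<eta> n \<le> real (num_msgs n R) * cell_mass p a R n m"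
    using cell_mass_asymptotically_uniform[OF p a] unfolding \<eta>_def[abs_def] by blast+
  show ?thesis
    unfolding covert_achievable_def Q0_xor_chan
  proof (intro exI[of _ "cell_encoder p a R"] exI[of _ "cell_decoder p a R"] conjI allI impI)
    show "valid_encoder n (num_msgs n R) (num_keys n RK) (cell_encoder p a R n)"
      and "causal_encoder n (num_msgs n R) (num_keys n RK) (cell_encoder p a R n)" for n
      using p by (simp_all add: valid_cell_encoder causal_cell_encoder)
    show "limsup (\<lambda>n. ereal (exp_cost (bern p) xor_chan (\<lambda>_. 0) n (num_msgs n R) (num_keys n RK)
                                 (cell_encoder p a R n))) \<le> ereal 0"
      by (simp add: exp_cost_def zero_ereal_def[symmetric] Limsup_const)
    show "(\<lambda>n. err_prob (bern p) xor_chan n (num_msgs n R) (num_keys n RK) (cell_encoder p a R n)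
                       (cell_decoder p a R n)) \<longlonglongrightarrow> 0"
      by (rule cell_code_err_prob_tendsto_0[OF p \<eta>])
    show "(\<lambda>n. rel_entropy (warden_out (bern p) xor_chan n (num_msgs n R) (num_keys n RK)
                            (cell_encoder p a R n))
                          (iid (bern p)) (seqs n)) \<longlonglongrightarrow> 0"
      using cell_code_kl_div_tendsto_0[OF p RK \<eta>] iid_bern_pos[OF p]
      by (subst rel_entropy_tendsto_0_iff) auto
  qed
qed

lemma covert_achievable_noncausal_if_causal:
  "covert_achievable True PS W x0 b B RK R \<Longrightarrow> covert_achievable False PS W x0 b B RK R"
  unfolding covert_achievable_def by blast

lemma covert_capacity_xor_chan:
  fixes causal :: bool
  assumes p: "0 < p" "p < 1" and RK: "0 \<le> RK"
  defines "S \<equiv> {R. covert_achievable causal (bern p) xor_chan False (\<lambda>_. 0) 0 RK R}"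
  shows "bdd_above S \<and> covert_capacity causal (bern p) xor_chan False (\<lambda>_. 0) 0 RK = Hb p"
proof -
  have upper: "R \<le> Hb p" if "R \<in> S" for R
    using covert_achievable_le_Hb[OF p RK] that by (auto simp: S_def)
  have lower: "R \<in> S" if "0 < R" "R < Hb p" for R
    using covert_achievable_below_Hb[OF p that RK] covert_achievable_noncausal_if_causal
    by (cases causal) (auto simp: S_def)
  have Hb_pos: "0 < Hb p"
    using entropy_nats_bern_pos[OF p] by (simp add: Hb_eq_entropy_nats[OF p])
  have "Sup S = Hb p"
  proof (rule cSup_eq_non_empty)
    show "S \<noteq> {}" using lower[of "Hb p / 2"] Hb_pos by auto
    show "\<And>R. R \<in> S \<Longrightarrow> R \<le> Hb p" by (rule upper)
    show "Hb p \<le> y" if "\<And>R. R \<in> S \<Longrightarrow> R \<le> y" for y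
    proof (rule ccontr)
      assume "\<not> Hb p \<le> y"
      then have "0 < (max y 0 + Hb p) / 2" "(max y 0 + Hb p) / 2 < Hb p" "y < (max y 0 + Hb p) / 2"
        using Hb_pos by auto
      then show False using that[OF lower] by fastforce
    qed
  qed
  then show ?thesis
    using upper by (auto simp: covert_capacity_def S_def bdd_above_def)
qed

theorem mainTheorem9:
  fixes p RK :: real
  assumes "0 < p" and "p < 1/2" and "0 < RK"
  shows "bdd_above {R. covert_achievable True (bern p) xor_chan False (\<lambda>_. 0) 0 RK R}
       \<and> covert_capacity True (bern p) xor_chan False (\<lambda>_. 0) 0 RK = Hb p
       \<and> bdd_above {R. covert_achievable False (bern p) xor_chan False (\<lambda>_. 0) 0 RK R}
       \<and> covert_capacity False (bern p) xor_chan False (\<lambda>_. 0) 0 RK = Hb p"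
  using covert_capacity_xor_chan[of p RK True] covert_capacity_xor_chan[of p RK False] assms
  by simp

end
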